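(* Assume (F1), (F2), (H1), (H2). Let $(c,\varphi)$ be a solution of the travelling wave problem and let $\Phi(\xi)=\int_{-\infty}^{\xi}\varphi(s)\,ds$. Then there exists $\gamma>0$ such that $$\sup_{\xi\in\mathbb{R}}\varphi(\xi)e^{-\gamma\xi}<\infty\quad\text{and}\quad\sup_{\xi\in\mathbb{R}}\Phi(\xi)e^{-\gamma\xi}<\infty.$$
   Context: Fix constants $d>0$, $\tau\geq0$, $K>0$, $f:[0,K]^2\to\mathbb{R}$ and $h:\mathbb{R}\to\mathbb{R}$ (partial derivatives of $f$ assumed to exist). (F1) $f\in C([0,K]^2,\mathbb{R})$, $f(0,0)=f(K,K)=0$, $f(u,u)>0$ for $u\in(0,K)$, $\partial_2f(u,v)\geq0$ on $[0,K]^2$. (F2) There exist $M>0$, $\sigma\in(0,1]$ with $0\leq \partial_1f(0,0)u+\partial_2f(0,0)v-f(u,v)\leq M(u+v)^{1+\sigma}$ on $[0,K]^2$, and $\partial_1f(K,K)+\partial_2f(K,K)<0$. (H1) $h\ge0$, even, integrable, $\int_{\mathbb{R}}h=1$. (H2) There is $\lambda_0\in(0,\infty]$ with $\int_0^\infty h(x)e^{\lambda x}dx<\infty$ for all $\lambda<\lambda_0$. Notation: $\Delta_1\varphi(\xi)=\varphi(\xi+1)-2\varphi(\xi)+\varphi(\xi-1)$, $(h*\varphi)(\xi)=\int h(y)\varphi(\xi-y)dy$. A solution $(c,\varphi)$ of the travelling wave problem consists of $c>0$ and a differentiable $\varphi:\mathbb{R}\to\mathbb{R}$ with $-c\varphi'(\xi)+d\Delta_1\varphi(\xi)+f(\varphi(\xi),(h*\varphi)(\xi-c\tau))=0$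 for all $\xi$, $\varphi(-\infty)=0$, $\varphi(+\infty)=K$, $0\le\varphi\le K$. *)

theory Defs
  imports "HOL-Analysis.Analysis"
begin

definition partials_on_square ::
  "real \<Rightarrow> (real \<Rightarrow> real \<Rightarrow> real) \<Rightarrow> (real \<Rightarrow> real \<Rightarrow> real) \<Rightarrow> (real \<Rightarrow> real \<Rightarrow> real) \<Rightarrow> bool" where
  "partials_on_square K f f1 f2 \<longleftrightarrow>
     (\<forall>u\<in>{0..K}. \<forall>v\<in>{0..K}.
        ((\<lambda>x. f x v) has_real_derivative f1 u v) (at u within {0..K}) \<and>
        ((\<lambda>y. f u y) has_real_derivative f2 u v) (at v within {0..K}))"

definition cond_F1 :: "real \<Rightarrow> (real \<Rightarrow> real \<Rightarrow> real) \<Rightarrow> (real \<Rightarrow> real \<Rightarrow> real) \<Rightarrow> bool" where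
  "cond_F1 K f f2 \<longleftrightarrow>
     continuous_on ({0..K} \<times> {0..K}) (\<lambda>(u, v). f u v) \<and>
     f 0 0 = 0 \<and> f K K = 0 \<and>
     (\<forall>u\<in>{0<..<K}. f u u > 0) \<and>
     (\<forall>u\<in>{0..K}. \<forall>v\<in>{0..K}. f2 u v \<ge> 0)"

definition cond_F2 ::
  "real \<Rightarrow> (real \<Rightarrow> real \<Rightarrow> real) \<Rightarrow> (real \<Rightarrow> real \<Rightarrow> real) \<Rightarrow> (real \<Rightarrow> real \<Rightarrow> real) \<Rightarrow> bool" where
  "cond_F2 K f f1 f2 \<longleftrightarrow>
     (\<exists>M>0. \<exists>\<sigma>\<in>{0<..1}. \<forall>u\<in>{0..K}. \<forall>v\<in>{0..K}.
        0 \<le> f1 0 0 * u + f2 0 0 * v - f u v \<and>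
        f1 0 0 * u + f2 0 0 * v - f u v \<le> M * (u + v) powr (1 + \<sigma>)) \<and>
     f1 K K + f2 K K < 0"

definition cond_H1 :: "(real \<Rightarrow> real) \<Rightarrow> bool" where
  "cond_H1 h \<longleftrightarrow> (\<forall>x. h x \<ge> 0) \<and> (\<forall>x. h (- x) = h x) \<and>
     integrable lborel h \<and> (\<integral>x. h x \<partial>lborel) = 1"

definition cond_H2 :: "(real \<Rightarrow> real) \<Rightarrow> bool" where
  "cond_H2 h \<longleftrightarrow> (\<exists>lam0::ereal. 0 < lam0 \<and>
     (\<forall>lam::real. ereal lam < lam0 \<longrightarrow>
        set_integrable lborel {0..} (\<lambda>x. h x * exp (lam * x))))"

definition discr_lap :: "(real \<Rightarrow> real) \<Rightarrow> real \<Rightarrow> real" where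
  "discr_lap \<phi> \<xi> = \<phi> (\<xi> + 1) - 2 * \<phi> \<xi> + \<phi> (\<xi> - 1)"

definition conv :: "(real \<Rightarrow> real) \<Rightarrow> (real \<Rightarrow> real) \<Rightarrow> real \<Rightarrow> real" where
  "conv h \<phi> \<xi> = (\<integral>y. h y * \<phi> (\<xi> - y) \<partial>lborel)"

definition tw_solution ::
  "real \<Rightarrow> real \<Rightarrow> real \<Rightarrow> (real \<Rightarrow> real \<Rightarrow> real) \<Rightarrow> (real \<Rightarrow> real) \<Rightarrow> real \<Rightarrow> (real \<Rightarrow> real) \<Rightarrow> bool" where
  "tw_solution d \<tau> K f h c \<phi> \<longleftrightarrow>
     c > 0 \<and> (\<forall>\<xi>. \<phi> differentiable (at \<xi>)) \<and>
     (\<forall>\<xi>. - c * deriv \<phi> \<xi> + d * discr_lap \<phi> \<xi> + f (\<phi> \<xi>) (conv h \<phi> (\<xi> - c * \<tau>)) = 0) \<and>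
     (\<phi> \<longlongrightarrow> 0) at_bot \<and> (\<phi> \<longlongrightarrow> K) at_top \<and>
     (\<forall>\<xi>. 0 \<le> \<phi> \<xi> \<and> \<phi> \<xi> \<le> K)"

end

theory Submission
  imports Defs
begin

text \<open>Near \<open>-\<infinity>\<close> the reaction term dominates a positive linear combination: for suitable \<open>\<alpha>\<close>,
  \<open>\<beta> \<ge> 0\<close> and \<open>R\<close> one has \<open>f(\<phi>, h * \<phi>) \<ge> \<alpha> \<phi> + \<beta> \<psi>\<^sub>R\<close> with \<open>\<alpha> + \<beta> H\<^sub>R > 0\<close>, where \<open>\<psi>\<^sub>R\<close>
  is the convolution with \<open>h\<close> cut off to \<open>[-R, R]\<close> and \<open>H\<^sub>R\<close> the mass of \<open>h\<close> there. The wave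
  equation says \<open>V' = f(\<phi>, h * \<phi>)\<close> for \<open>V = c \<phi> - d \<Delta>\<^sub>1 G\<close>, \<open>G\<close> an antiderivative of \<open>\<phi>\<close>.
  Integrating the lower bound first shows that \<open>G\<close> is bounded below, so that
  \<open>\<Phi>(\<xi>) = \<integral>\<^sub>-\<^sub>\<infinity>\<^sup>\<xi> \<phi>\<close> exists, and then gives the delay inequality
  \<open>V(t) \<ge> \<alpha> \<Phi>(t) + \<beta> H\<^sub>R \<Phi>(t - c\<tau> - R)\<close> near \<open>-\<infinity>\<close>. An energy built from an antiderivative of
  \<open>\<Phi>\<close> is monotone under this inequality, and comparing it at \<open>\<xi>\<close> and \<open>\<xi> - N\<close> yields
  \<open>\<Phi>(\<xi> - T) \<le> \<Phi>(\<xi>) / 2\<close>, i.e. exponential decay of \<open>\<Phi>\<close>. Finally \<open>\<phi>\<close> is Lipschitz, so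
  \<open>\<phi>(t)\<^sup>2 \<le> 4 \<Lambda> \<Phi>(t + 1)\<close> and \<open>\<phi>\<close> decays exponentially at half the rate.\<close>

lemma filterlim_add_const_at_bot: "filterlim (\<lambda>x::real. x + a) at_bot at_bot"
  using filterlim_tendsto_add_at_bot_iff[OF tendsto_const[of a], of "\<lambda>x. x"] filterlim_ident
  by (simp add: add.commute)

lemma continuous_has_antiderivative:
  fixes f :: "real \<Rightarrow> real"
  assumes "\<And>x. isCont f x"
  obtains F where "\<And>x. (F has_real_derivative f x) (at x)"
proof -
  have "\<exists>F. \<forall>x::real. -\<infinity> < ereal x \<longrightarrow> ereal x < \<infinity> \<longrightarrow> (F has_vector_derivative f x) (at x)"
    by (rule einterval_antiderivative) (auto intro: assms)
  then show ?thesis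
    using that unfolding has_real_derivative_iff_has_vector_derivative by auto
qed

lemma antiderivative_of_mono_bounds:
  fixes P \<Phi> :: "real \<Rightarrow> real"
  assumes P: "\<And>t. (P has_real_derivative \<Phi> t) (at t)"
    and mono: "\<And>u v. u \<le> v \<Longrightarrow> \<Phi> u \<le> \<Phi> v" and ab: "a \<le> b"
  shows "(b - a) * \<Phi> a \<le> P b - P a" "P b - P a \<le> (b - a) * \<Phi> b"
proof -
  have "(b - a) * \<Phi> a \<le> P b - P a \<and> P b - P a \<le> (b - a) * \<Phi> b"
  proof (cases "a = b")
    case False
    then obtain z where z: "a < z" "z < b" "P b - P a = (b - a) * \<Phi> z"
      using MVT2[of a b P \<Phi>] P ab by fastforce
    then show ?thesis
      using ab by (auto intro!: mult_left_mono mono)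
  qed simp
  then show "(b - a) * \<Phi> a \<le> P b - P a" "P b - P a \<le> (b - a) * \<Phi> b" by auto
qed

lemma halving_imp_exp_bound:
  fixes \<Phi> :: "real \<Rightarrow> real"
  assumes nonneg: "\<And>t. \<Phi> t \<ge> 0" and mono: "\<And>u v. u \<le> v \<Longrightarrow> \<Phi> u \<le> \<Phi> v"
    and T: "T > 0" and half: "\<And>\<xi>. \<xi> \<le> \<xi>0 \<Longrightarrow> \<Phi> (\<xi> - T) \<le> \<Phi> \<xi> / 2"
    and t: "t \<le> \<xi>0"
  shows "\<Phi> t \<le> 2 * \<Phi> \<xi>0 * exp (ln 2 / T * (t - \<xi>0))"
proof -
  have iter: "\<Phi> (\<xi>0 - real n * T) \<le> \<Phi> \<xi>0 / 2 ^ n" for n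
  proof (induction n)
    case (Suc n)
    have "\<Phi> (\<xi>0 - real (Suc n) * T) = \<Phi> ((\<xi>0 - real n * T) - T)" by (simp add: algebra_simps)
    also have "\<dots> \<le> \<Phi> (\<xi>0 - real n * T) / 2" using T by (intro half) simp
    also have "\<dots> \<le> \<Phi> \<xi>0 / 2 ^ Suc n" using Suc by simp
    finally show ?case .
  qed simp
  define q where "q = (\<xi>0 - t) / T"
  define n where "n = nat \<lfloor>q\<rfloor>"
  have q0: "q \<ge> 0" using t T by (simp add: q_def)
  have n: "real n \<le> q" "q < real n + 1" using q0 by (simp_all add: n_def)
  have "real n * T \<le> \<xi>0 - t" using n T by (simp add: q_def pos_le_divide_eq)
  then have "\<Phi> t \<le> \<Phi> (\<xi>0 - real n * T)" by (intro mono) simp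
  also have "\<dots> \<le> \<Phi> \<xi>0 / 2 ^ n" by (rule iter)
  also have "\<dots> = 2 * \<Phi> \<xi>0 * exp (- (real n + 1) * ln 2)"
  proof -
    have "exp ((real n + 1) * ln 2) = 2 ^ Suc n" by (simp add: distrib_right exp_add exp_of_nat_mult)
    then have "exp (- (real n + 1) * ln 2) = 1 / (2 * 2 ^ n)"
      by (metis exp_minus inverse_eq_divide minus_mult_left power_Suc)
    then show ?thesis by simp
  qed
  also have "\<dots> \<le> 2 * \<Phi> \<xi>0 * exp (ln 2 / T * (t - \<xi>0))"
  proof -
    have "ln 2 / T * (t - \<xi>0) = - q * ln 2" using T by (simp add: q_def field_simps)
    moreover have "q * ln 2 \<le> (real n + 1) * ln 2" using n by (intro mult_right_mono) auto
    ultimately have "- (real n + 1) * ln 2 \<le> ln 2 / T * (t - \<xi>0)" by linarith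
    then show ?thesis using nonneg[of \<xi>0] by (intro mult_left_mono) auto
  qed
  finally show ?thesis .
qed

lemma sq_le_increment_of_lipschitz:
  fixes \<phi> \<Phi> :: "real \<Rightarrow> real"
  assumes \<Phi>: "\<And>x. (\<Phi> has_real_derivative \<phi> x) (at x)" and nonneg: "\<And>x. \<phi> x \<ge> 0"
    and lip: "\<And>x y. \<bar>\<phi> x - \<phi> y\<bar> \<le> \<Lambda> * \<bar>x - y\<bar>" and \<Lambda>: "\<Lambda> > 0"
    and small: "\<phi> t \<le> 2 * \<Lambda>"
  shows "(\<phi> t)\<^sup>2 \<le> 4 * \<Lambda> * (\<Phi> (t + 1) - \<Phi> t)"
proof (cases "\<phi> t = 0")
  case True
  have "\<Phi> t \<le> \<Phi> (t + 1)"
    by (rule DERIV_nonneg_imp_nondecreasing) (use \<Phi> nonneg in auto)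
  then show ?thesis using True \<Lambda> by simp
next
  case False
  define l where "l = \<phi> t / (2 * \<Lambda>)"
  have l: "l > 0" "l \<le> 1" using False nonneg[of t] small \<Lambda> by (auto simp: l_def)
  obtain z where z: "t < z" "z < t + l" "\<Phi> (t + l) - \<Phi> t = l * \<phi> z"
    using MVT2[of t "t + l" \<Phi> \<phi>] \<Phi> l by auto
  have "\<phi> t - \<phi> z \<le> \<Lambda> * l"
    using lip[of t z] z \<Lambda> by (smt (verit, best) mult_left_mono)
  then have "\<phi> t / 2 \<le> \<phi> z" using \<Lambda> by (simp add: l_def)
  have "(\<phi> t)\<^sup>2 / (4 * \<Lambda>) = l * (\<phi> t / 2)" by (simp add: l_def power2_eq_square)
  also have "\<dots> \<le> l * \<phi> z" using \<open>\<phi> t / 2 \<le> \<phi> z\<close> l by (intro mult_left_mono) auto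
  also have "\<dots> = \<Phi> (t + l) - \<Phi> t" using z(3) by simp
  also have "\<dots> \<le> \<Phi> (t + 1) - \<Phi> t"
    using DERIV_nonneg_imp_nondecreasing[of "t + l" "t + 1" \<Phi>] \<Phi> nonneg l by auto
  finally show ?thesis using \<Lambda> by (simp add: divide_le_eq mult.commute)
qed

lemma exp_bound_of_antiderivative_exp_bound:
  fixes \<phi> \<Phi> :: "real \<Rightarrow> real"
  assumes \<Phi>: "\<And>x. (\<Phi> has_real_derivative \<phi> x) (at x)" and nonneg: "\<And>x. \<phi> x \<ge> 0"
    and lip: "\<And>x y. \<bar>\<phi> x - \<phi> y\<bar> \<le> \<Lambda> * \<bar>x - y\<bar>" and \<Lambda>: "\<Lambda> > 0"
    and small: "\<And>x. \<phi> x \<le> 2 * \<Lambda>" and \<Phi>_nonneg: "\<And>x. \<Phi> x \<ge> 0"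
    and \<Phi>_bound: "\<And>x. x \<le> \<xi>1 \<Longrightarrow> \<Phi> x \<le> C * exp (\<gamma> * x)" and t: "t \<le> \<xi>1 - 1"
  shows "\<phi> t \<le> sqrt (4 * \<Lambda> * C * exp \<gamma>) * exp (\<gamma> / 2 * t)"
proof -
  have "(\<phi> t)\<^sup>2 \<le> 4 * \<Lambda> * (\<Phi> (t + 1) - \<Phi> t)"
    by (rule sq_le_increment_of_lipschitz[OF \<Phi> nonneg lip \<Lambda> small])
  also have "\<dots> \<le> 4 * \<Lambda> * \<Phi> (t + 1)"
    using \<Phi>_nonneg[of t] \<Lambda> by (intro mult_left_mono) auto
  also have "\<dots> \<le> 4 * \<Lambda> * C * exp \<gamma> * exp (\<gamma> / 2 * t) ^ 2"
  proof -
    have "exp (\<gamma> / 2 * t) ^ 2 = exp (\<gamma> * t)"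
      by (simp add: power2_eq_square exp_add[symmetric])
    moreover have "\<Phi> (t + 1) \<le> C * (exp \<gamma> * exp (\<gamma> * t))"
      using \<Phi>_bound[of "t + 1"] t by (simp add: distrib_left exp_add mult.commute)
    ultimately show ?thesis using \<Lambda> by (simp add: mult.assoc)
  qed
  finally have "sqrt ((\<phi> t)\<^sup>2) \<le> sqrt (4 * \<Lambda> * C * exp \<gamma> * exp (\<gamma> / 2 * t) ^ 2)"
    by (rule real_sqrt_le_mono)
  then show ?thesis using nonneg[of t] by (simp add: real_sqrt_mult)
qed

lemma exp_bound_extend_right:
  fixes \<phi> :: "real \<Rightarrow> real"
  assumes left: "\<And>t. t \<le> \<xi>1 \<Longrightarrow> \<phi> t \<le> C * exp (\<gamma> * t)" and bdd: "\<And>t. \<phi> t \<le> B"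
    and "B \<ge> 0" "\<gamma> > 0"
  shows "\<phi> t \<le> max C (B * exp (- \<gamma> * \<xi>1)) * exp (\<gamma> * t)"
proof (cases "t \<le> \<xi>1")
  case True
  then show ?thesis using left[OF True] by (smt (verit) exp_gt_zero max.cobounded1 mult_right_mono)
next
  case False
  have "1 \<le> exp (\<gamma> * (t - \<xi>1))" using assms False by simp
  then have "\<phi> t \<le> B * exp (\<gamma> * (t - \<xi>1))"
    using bdd[of t] \<open>B \<ge> 0\<close> by (smt (verit) mult_left_mono mult_cancel_left1)
  also have "\<dots> = B * exp (- \<gamma> * \<xi>1) * exp (\<gamma> * t)" by (simp add: exp_add[symmetric] algebra_simps)
  also have "\<dots> \<le> max C (B * exp (- \<gamma> * \<xi>1)) * exp (\<gamma> * t)" by (intro mult_right_mono) auto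
  finally show ?thesis .
qed

lemma powr_le_linear_near_0:
  fixes M \<sigma> \<delta> w :: real
  assumes M: "M > 0" and \<sigma>: "\<sigma> > 0" and \<delta>: "\<delta> > 0" and w: "0 \<le> w" "w \<le> (\<delta> / M) powr (1 / \<sigma>)"
  shows "M * w powr (1 + \<sigma>) \<le> \<delta> * w"
proof (cases "w = 0")
  case False
  have "w powr \<sigma> \<le> ((\<delta> / M) powr (1 / \<sigma>)) powr \<sigma>"
    using w \<sigma> by (intro powr_mono2) auto
  also have "\<dots> = \<delta> / M" using \<sigma> \<delta> M by (simp add: powr_powr)
  finally have "M * w powr \<sigma> \<le> \<delta>" using M by (simp add: field_simps)
  then have "w * (M * w powr \<sigma>) \<le> w * \<delta>" using w by (intro mult_left_mono) auto
  then show ?thesis using w False by (simp add: powr_add algebra_simps)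
qed simp

section \<open>A delay differential inequality\<close>

context
  fixes c d \<alpha> \<gamma> L \<xi>0 :: real and \<phi> \<Phi> :: "real \<Rightarrow> real"
  assumes c: "c \<ge> 0" and d: "d > 0" and L: "L \<ge> 0" and rate: "\<alpha> + \<gamma> > 0"
    and \<Phi>_nonneg: "\<And>t. \<Phi> t \<ge> 0" and \<Phi>_mono: "\<And>u v. u \<le> v \<Longrightarrow> \<Phi> u \<le> \<Phi> v"
    and \<Phi>_deriv: "\<And>t. (\<Phi> has_real_derivative \<phi> t) (at t)"
    and supersolution: "\<And>t. t \<le> \<xi>0 \<Longrightarrow>
      \<alpha> * \<Phi> t + \<gamma> * \<Phi> (t - L) \<le> c * \<phi> t - d * (\<Phi> (t + 1) - 2 * \<Phi> t + \<Phi> (t - 1))"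
begin

text \<open>For an antiderivative \<open>P\<close> of \<open>\<Phi>\<close>, the derivative of this energy is the supersolution defect
  plus \<open>(\<alpha> + max 0 (-\<alpha>)) * (\<Phi> t - \<Phi> (t - L)) \<ge> 0\<close>; so the energy increases on \<open>{..\<xi>0}\<close>.\<close>

definition delay_energy :: "(real \<Rightarrow> real) \<Rightarrow> real \<Rightarrow> real" where
  "delay_energy P t = c * \<Phi> t - d * (P (t + 1) - 2 * P t + P (t - 1))
     + max 0 (- \<alpha>) * (P t - P (t - L)) - (\<alpha> + \<gamma>) * P (t - L)"

lemma delay_energy_mono:
  assumes P: "\<And>t. (P has_real_derivative \<Phi> t) (at t)" and uv: "u \<le> v" "v \<le> \<xi>0"
  shows "delay_energy P u \<le> delay_energy P v"
proof (rule DERIV_nonneg_imp_nondecreasing[OF uv(1)])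
  fix t assume t: "u \<le> t" "t \<le> v"
  have shift: "((\<lambda>t. P (t + a)) has_real_derivative \<Phi> (t + a)) (at t)" for a
    using P[of "t + a"] by (simp add: DERIV_shift)
  have "(delay_energy P has_real_derivative c * \<phi> t - d * (\<Phi> (t + 1) - 2 * \<Phi> t + \<Phi> (t - 1))
      + max 0 (- \<alpha>) * (\<Phi> t - \<Phi> (t - L)) - (\<alpha> + \<gamma>) * \<Phi> (t - L)) (at t)"
    unfolding delay_energy_def[abs_def]
    using shift[of 1] shift[of "-1"] shift[of "-L"]
    by (auto intro!: derivative_eq_intros \<Phi>_deriv P)
  moreover have "0 \<le> c * \<phi> t - d * (\<Phi> (t + 1) - 2 * \<Phi> t + \<Phi> (t - 1))
      + max 0 (- \<alpha>) * (\<Phi> t - \<Phi> (t - L)) - (\<alpha> + \<gamma>) * \<Phi> (t - L)"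
  proof -
    have "0 \<le> (\<alpha> + max 0 (- \<alpha>)) * (\<Phi> t - \<Phi> (t - L))"
      using \<Phi>_mono[of "t - L" t] L by (intro mult_nonneg_nonneg) auto
    moreover have "c * \<phi> t - d * (\<Phi> (t + 1) - 2 * \<Phi> t + \<Phi> (t - 1))
        + max 0 (- \<alpha>) * (\<Phi> t - \<Phi> (t - L)) - (\<alpha> + \<gamma>) * \<Phi> (t - L) =
      (c * \<phi> t - d * (\<Phi> (t + 1) - 2 * \<Phi> t + \<Phi> (t - 1)) - (\<alpha> * \<Phi> t + \<gamma> * \<Phi> (t - L)))
        + (\<alpha> + max 0 (- \<alpha>)) * (\<Phi> t - \<Phi> (t - L))"
      by (simp add: algebra_simps)
    ultimately show ?thesis using supersolution[of t] t uv by linarith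
  qed
  ultimately show "\<exists>y. (delay_energy P has_real_derivative y) (at t) \<and> 0 \<le> y" by blast
qed

lemma delay_energy_upper:
  assumes P: "\<And>t. (P has_real_derivative \<Phi> t) (at t)"
  shows "delay_energy P t \<le> (c + max 0 (- \<alpha>) * L) * \<Phi> t - (\<alpha> + \<gamma>) * P (t - L)"
proof -
  note bounds = antiderivative_of_mono_bounds[OF P \<Phi>_mono]
  have "\<Phi> t \<le> P (t + 1) - P t" "P t - P (t - 1) \<le> \<Phi> t" "P t - P (t - L) \<le> L * \<Phi> t"
    using bounds[of t "t + 1"] bounds[of "t - 1" t] bounds[of "t - L" t] L by auto
  then have "- d * (P (t + 1) - 2 * P t + P (t - 1)) \<le> 0"
    "max 0 (- \<alpha>) * (P t - P (t - L)) \<le> max 0 (- \<alpha>) * (L * \<Phi> t)"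
    using d by (auto intro!: mult_left_mono)
  then show ?thesis unfolding delay_energy_def by (simp add: algebra_simps)
qed

lemma delay_energy_lower:
  assumes P: "\<And>t. (P has_real_derivative \<Phi> t) (at t)"
  shows "- d * \<Phi> (t + 1) - (\<alpha> + \<gamma>) * P (t - L) \<le> delay_energy P t"
proof -
  note bounds = antiderivative_of_mono_bounds[OF P \<Phi>_mono]
  have "P (t + 1) - P t \<le> \<Phi> (t + 1)" "0 \<le> P t - P (t - 1)" "0 \<le> P t - P (t - L)"
    using bounds[of t "t + 1"] bounds[of "t - 1" t] bounds[of "t - L" t] L
      \<Phi>_nonneg[of "t - 1"] mult_nonneg_nonneg[OF L \<Phi>_nonneg[of "t - L"]] by auto
  then have "- d * (P (t + 1) - 2 * P t + P (t - 1)) \<ge> - d * \<Phi> (t + 1)"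
    "max 0 (- \<alpha>) * (P t - P (t - L)) \<ge> 0" "c * \<Phi> t \<ge> 0"
    using d c \<Phi>_nonneg[of t] by (auto intro!: mult_left_mono)
  then show ?thesis unfolding delay_energy_def by (simp add: algebra_simps)
qed

lemma delay_supersolution_halves:
  obtains T where "T > 0" "\<And>\<xi>. \<xi> \<le> \<xi>0 \<Longrightarrow> \<Phi> (\<xi> - T) \<le> \<Phi> \<xi> / 2"
proof -
  obtain P where P: "\<And>t. (P has_real_derivative \<Phi> t) (at t)"
    using continuous_has_antiderivative \<Phi>_deriv DERIV_isCont by metis
  define \<eta> where "\<eta> = \<alpha> + \<gamma>"
  define E where "E = c + max 0 (- \<alpha>) * L"
  define N where "N = 2 * (E + d) / \<eta> + 1"
  have E: "E \<ge> 0" using c L by (simp add: E_def)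
  have N: "N \<ge> 1" "\<eta> * N = 2 * (E + d) + \<eta>"
    using E d rate by (auto simp: N_def \<eta>_def field_simps)
  have "\<Phi> (\<xi> - N - L) \<le> \<Phi> \<xi> / 2" if \<xi>: "\<xi> \<le> \<xi>0" for \<xi>
  proof -
    define X where "X = \<Phi> (\<xi> - N - L)"
    have "\<xi> - N \<le> \<xi>" using N by simp
    then have energy: "- d * \<Phi> (\<xi> - N + 1) - \<eta> * P (\<xi> - N - L) \<le> E * \<Phi> \<xi> - \<eta> * P (\<xi> - L)"
      using delay_energy_lower[OF P, of "\<xi> - N"] delay_energy_mono[OF P _ \<xi>, of "\<xi> - N"]
        delay_energy_upper[OF P, of \<xi>] unfolding \<eta>_def E_def by linarith
    have "(E + d) * (2 * X) = \<eta> * (N * X) - \<eta> * X"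
      by (simp only: mult.assoc[symmetric] N(2)) (simp add: algebra_simps)
    also have "\<dots> \<le> \<eta> * (N * X)" using rate \<Phi>_nonneg by (simp add: \<eta>_def X_def)
    also have "\<dots> \<le> \<eta> * (P (\<xi> - L) - P (\<xi> - N - L))"
      using antiderivative_of_mono_bounds(1)[OF P \<Phi>_mono, of "\<xi> - N - L" "\<xi> - L"] N rate
      by (intro mult_left_mono) (auto simp: X_def \<eta>_def)
    also have "\<dots> \<le> E * \<Phi> \<xi> + d * \<Phi> (\<xi> - N + 1)" using energy by (simp add: right_diff_distrib)
    also have "\<dots> \<le> (E + d) * \<Phi> \<xi>"
      using d N by (simp add: distrib_right mult_left_mono \<Phi>_mono)
    finally have "(E + d) * (2 * X) \<le> (E + d) * \<Phi> \<xi>" .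
    then show ?thesis using E d by (simp add: X_def)
  qed
  then show ?thesis using that[of "N + L"] N L by (simp add: diff_diff_eq)
qed

end

section \<open>Integrals against exponential weights\<close>

lemma nn_integral_exp_atMost:
  fixes \<gamma> \<xi> :: real assumes g: "\<gamma> > 0"
  shows "(\<integral>\<^sup>+x. ennreal (exp (\<gamma> * x)) * indicator {..\<xi>} x \<partial>lborel) = ennreal (exp (\<gamma> * \<xi>) / \<gamma>)"
proof -
  have "(\<integral>\<^sup>+x. ennreal (exp (\<gamma> * x)) * indicator {..\<xi>} x \<partial>lborel) =
        (\<integral>\<^sup>+x. ennreal (exp (\<gamma> * (0 + -1 * x))) * indicator {..\<xi>} (0 + -1 * x) \<partial>lborel)"
    using nn_integral_real_affine[where c="-1" and t=0 and f="\<lambda>x. ennreal (exp (\<gamma> * x)) * indicator {..\<xi>} x"]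
    by simp
  also have "\<dots> = (\<integral>\<^sup>+x. ennreal (exp (- \<gamma> * x)) * indicator {-\<xi>..} x \<partial>lborel)"
    by (intro nn_integral_cong) (auto simp: indicator_def)
  also have "\<dots> = ennreal (exp (- \<gamma> * (-\<xi>)) / \<gamma>)"
    by (rule nn_integral_has_integral_lebesgue'[OF _ has_integral_exp_minus_to_infinity[OF g]]) simp
  finally show ?thesis by simp
qed

lemma nn_integral_atMost_le_of_exp_bound:
  fixes \<phi> :: "real \<Rightarrow> real" and C \<gamma> \<xi> :: real
  assumes bd: "\<And>t. \<phi> t \<le> C * exp (\<gamma> * t)" and g: "\<gamma> > 0" and C: "C \<ge> 0"
  shows "(\<integral>\<^sup>+x. ennreal (indicator {..\<xi>} x * \<phi> x) \<partial>lborel) \<le> ennreal (C * (exp (\<gamma> * \<xi>) / \<gamma>))"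
proof -
  have "(\<integral>\<^sup>+x. ennreal (indicator {..\<xi>} x * \<phi> x) \<partial>lborel) \<le>
        (\<integral>\<^sup>+x. ennreal C * (ennreal (exp (\<gamma> * x)) * indicator {..\<xi>} x) \<partial>lborel)"
  proof (intro nn_integral_mono)
    fix x
    have "ennreal (indicator {..\<xi>} x * \<phi> x) \<le> ennreal (C * exp (\<gamma> * x) * indicator {..\<xi>} x)"
      using bd[of x] by (intro ennreal_leI) (simp add: indicator_def)
    also have "\<dots> = ennreal C * (ennreal (exp (\<gamma> * x)) * indicator {..\<xi>} x)"
      using C by (simp add: ennreal_mult indicator_def)
    finally show "ennreal (indicator {..\<xi>} x * \<phi> x) \<le> ennreal C * (ennreal (exp (\<gamma> * x)) * indicator {..\<xi>} x)" .
  qed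
  also have "\<dots> = ennreal C * (\<integral>\<^sup>+x. ennreal (exp (\<gamma> * x)) * indicator {..\<xi>} x \<partial>lborel)"
    by (rule nn_integral_cmult) measurable
  also have "\<dots> = ennreal (C * (exp (\<gamma> * \<xi>) / \<gamma>))"
    unfolding nn_integral_exp_atMost[OF g] by (rule ennreal_mult[symmetric]) (use C g in auto)
  finally show ?thesis .
qed

lemma set_integral_atMost_of_exp_bound:
  fixes \<phi> :: "real \<Rightarrow> real" and C \<gamma> \<xi> :: real
  assumes meas: "\<phi> \<in> borel_measurable borel" and nn: "\<And>t. 0 \<le> \<phi> t"
    and bd: "\<And>t. \<phi> t \<le> C * exp (\<gamma> * t)" and g: "\<gamma> > 0" and C: "C \<ge> 0"
  shows "set_integrable lborel {..\<xi>} \<phi>" "(LINT s:{..\<xi>}|lborel. \<phi> s) \<le> C * (exp (\<gamma> * \<xi>) / \<gamma>)"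
proof -
  note bound = nn_integral_atMost_le_of_exp_bound[OF bd g C, of \<xi>]
  have int: "integrable lborel (\<lambda>x. indicator {..\<xi>} x * \<phi> x)"
  proof (rule integrableI_nonneg)
    show "(\<lambda>x. indicator {..\<xi>} x * \<phi> x) \<in> borel_measurable lborel" using meas by measurable
    show "AE x in lborel. 0 \<le> indicator {..\<xi>} x * \<phi> x" using nn by (simp add: indicator_def)
    show "(\<integral>\<^sup>+x. ennreal (indicator {..\<xi>} x * \<phi> x) \<partial>lborel) < \<infinity>"
      using bound by (simp add: le_less_trans)
  qed
  then show "set_integrable lborel {..\<xi>} \<phi>" by (simp add: set_integrable_def)
  have "ennreal (LINT s:{..\<xi>}|lborel. \<phi> s) = (\<integral>\<^sup>+x. ennreal (indicator {..\<xi>} x * \<phi> x) \<partial>lborel)"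
    unfolding set_lebesgue_integral_def real_scaleR_def
    by (rule nn_integral_eq_integral[symmetric]) (use int nn in \<open>auto simp: indicator_def\<close>)
  with bound have "ennreal (LINT s:{..\<xi>}|lborel. \<phi> s) \<le> ennreal (C * (exp (\<gamma> * \<xi>) / \<gamma>))"
    by simp
  then show "(LINT s:{..\<xi>}|lborel. \<phi> s) \<le> C * (exp (\<gamma> * \<xi>) / \<gamma>)"
    using C g by (simp add: ennreal_le_iff)
qed

lemma exp_bound_imp_weighted_bounds:
  fixes \<phi> :: "real \<Rightarrow> real" and C \<gamma> :: real
  assumes meas: "\<phi> \<in> borel_measurable borel" and nn: "\<And>t. 0 \<le> \<phi> t"
    and bd: "\<And>t. \<phi> t \<le> C * exp (\<gamma> * t)" and g: "\<gamma> > 0" and C: "C \<ge> 0"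
  shows "(\<forall>\<xi>. set_integrable lborel {..\<xi>} \<phi>) \<and>
    bdd_above (range (\<lambda>\<xi>. \<phi> \<xi> * exp (- \<gamma> * \<xi>))) \<and>
    bdd_above (range (\<lambda>\<xi>. (LINT s:{..\<xi>}|lborel. \<phi> s) * exp (- \<gamma> * \<xi>)))"
proof (intro conjI allI)
  note integral = set_integral_atMost_of_exp_bound[OF meas nn bd g C]
  show "set_integrable lborel {..\<xi>} \<phi>" for \<xi> by (rule integral(1))
  have "\<phi> \<xi> * exp (- \<gamma> * \<xi>) \<le> C" for \<xi>
    using mult_right_mono[OF bd[of \<xi>], of "exp (- \<gamma> * \<xi>)"] by (simp add: mult.assoc exp_add[symmetric])
  then show "bdd_above (range (\<lambda>\<xi>. \<phi> \<xi> * exp (- \<gamma> * \<xi>)))" by (intro bdd_aboveI2)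
  have "(LINT s:{..\<xi>}|lborel. \<phi> s) * exp (- \<gamma> * \<xi>) \<le> C / \<gamma>" for \<xi>
    using mult_right_mono[OF integral(2)[of \<xi>], of "exp (- \<gamma> * \<xi>)"]
    by (simp add: field_simps exp_add[symmetric])
  then show "bdd_above (range (\<lambda>\<xi>. (LINT s:{..\<xi>}|lborel. \<phi> s) * exp (- \<gamma> * \<xi>)))"
    by (intro bdd_aboveI2)
qed

section \<open>Travelling waves\<close>

locale travelling_wave =
  fixes d \<tau> K c :: real and f f1 f2 :: "real \<Rightarrow> real \<Rightarrow> real" and h \<phi> :: "real \<Rightarrow> real"
    and M \<sigma> :: real
  assumes d: "d > 0" and tau: "\<tau> \<ge> 0" and K: "K > 0" and c: "c > 0"
    and partials: "partials_on_square K f f1 f2"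
    and f_cont: "continuous_on ({0..K} \<times> {0..K}) (\<lambda>(u, v). f u v)"
    and f_diag_pos: "\<And>u. u \<in> {0<..<K} \<Longrightarrow> f u u > 0"
    and f2_nonneg: "\<And>u v. u \<in> {0..K} \<Longrightarrow> v \<in> {0..K} \<Longrightarrow> f2 u v \<ge> 0"
    and M: "M > 0" and \<sigma>: "0 < \<sigma>" "\<sigma> \<le> 1"
    and F2: "\<And>u v. u \<in> {0..K} \<Longrightarrow> v \<in> {0..K} \<Longrightarrow>
        0 \<le> f1 0 0 * u + f2 0 0 * v - f u v \<and>
        f1 0 0 * u + f2 0 0 * v - f u v \<le> M * (u + v) powr (1 + \<sigma>)"
    and h_nonneg: "\<And>x. h x \<ge> 0" and h_integrable: "integrable lborel h"
    and h_integral: "(\<integral>x. h x \<partial>lborel) = 1"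
    and \<phi>_differentiable: "\<And>\<xi>. \<phi> differentiable (at \<xi>)"
    and wave_eq: "\<And>\<xi>. - c * deriv \<phi> \<xi> + d * discr_lap \<phi> \<xi> + f (\<phi> \<xi>) (conv h \<phi> (\<xi> - c * \<tau>)) = 0"
    and \<phi>_at_bot: "(\<phi> \<longlongrightarrow> 0) at_bot"
    and \<phi>_range: "\<And>\<xi>. 0 \<le> \<phi> \<xi> \<and> \<phi> \<xi> \<le> K"
begin

definition "a = f1 0 0"
definition "b = f2 0 0"
definition "\<kappa> = c * \<tau>"
definition "\<psi> s = conv h \<phi> (s - \<kappa>)"

lemma \<kappa>_nonneg: "\<kappa> \<ge> 0" using c tau by (simp add: \<kappa>_def)

lemma \<phi>_nonneg: "\<phi> x \<ge> 0" and \<phi>_le: "\<phi> x \<le> K" using \<phi>_range by auto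

lemma \<phi>_isCont: "isCont \<phi> x"
  using \<phi>_differentiable differentiable_imp_continuous_within by blast

lemma \<phi>_measurable[measurable]: "\<phi> \<in> borel_measurable borel"
  using \<phi>_isCont by (simp add: borel_measurable_continuous_onI continuous_at_imp_continuous_on)

lemma h_measurable[measurable]: "h \<in> borel_measurable borel"
  using borel_measurable_integrable[OF h_integrable] by simp

lemma \<phi>_deriv: "(\<phi> has_real_derivative deriv \<phi> x) (at x)"
  using \<phi>_differentiable DERIV_deriv_iff_real_differentiable by blast

lemma b_nonneg: "b \<ge> 0" using f2_nonneg K by (simp add: b_def)

lemma f_le_linear: "u \<in> {0..K} \<Longrightarrow> v \<in> {0..K} \<Longrightarrow> f u v \<le> a * u + b * v"
  using F2 by (force simp: a_def b_def)

lemma f_ge_linear_minus_powr: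
  "u \<in> {0..K} \<Longrightarrow> v \<in> {0..K} \<Longrightarrow> a * u + b * v - M * (u + v) powr (1 + \<sigma>) \<le> f u v"
  using F2 by (force simp: a_def b_def)

lemma a_plus_b_pos: "a + b > 0"
proof -
  have u: "K/2 \<in> {0<..<K}" "K/2 \<in> {0..K}" using K by auto
  have "0 < f (K/2) (K/2)" using f_diag_pos u by blast
  also have "\<dots> \<le> (a + b) * (K/2)" using f_le_linear[OF u(2) u(2)] by (simp add: algebra_simps)
  finally show ?thesis using K by (simp add: zero_less_mult_iff)
qed

lemma f_mono_right:
  assumes u: "u \<in> {0..K}" and v: "0 \<le> v" "v \<le> v'" "v' \<le> K"
  shows "f u v \<le> f u v'"
proof (rule DERIV_nonneg_imp_increasing_open[of v v' "f u"])
  fix x assume x: "v < x" "x < v'"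
  have "((\<lambda>y. f u y) has_real_derivative f2 u x) (at x within {0..K})"
    using partials u x v unfolding partials_on_square_def by auto
  moreover have "at x within {0..K} = at x" using x v
    by (intro at_within_interior) (auto simp: interior_atLeastAtMost_real)
  ultimately show "\<exists>y. DERIV (f u) x :> y \<and> 0 \<le> y"
    using f2_nonneg u x v by auto
next
  have "continuous_on {0..K} ((\<lambda>(u, v). f u v) \<circ> (\<lambda>y. (u, y)))"
    by (rule continuous_on_compose)
      (use u in \<open>auto intro!: continuous_intros continuous_on_subset[OF f_cont]\<close>)
  then have "continuous_on {0..K} (f u)" by (simp add: o_def)
  then show "continuous_on {v..v'} (f u)" by (rule continuous_on_subset) (use v in auto)
qed (rule v(2))

lemma f_bounded: obtains B where "B \<ge> 0" "\<And>u v. u \<in> {0..K} \<Longrightarrow> v \<in> {0..K} \<Longrightarrow> \<bar>f u v\<bar> \<le> B"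
proof -
  have "compact ((\<lambda>(u, v). f u v) ` ({0..K} \<times> {0..K}))"
    by (intro compact_continuous_image f_cont compact_Times) auto
  then obtain B where "\<forall>x\<in>(\<lambda>(u, v). f u v) ` ({0..K} \<times> {0..K}). norm x \<le> B"
    using compact_imp_bounded bounded_iff by blast
  then have "\<And>u v. u \<in> {0..K} \<Longrightarrow> v \<in> {0..K} \<Longrightarrow> \<bar>f u v\<bar> \<le> B" by force
  moreover have "B \<ge> 0" using calculation[of 0 0] K by fastforce
  ultimately show ?thesis using that by blast
qed

lemma h_mult_\<phi>_le: "h y * \<phi> x \<le> K * h y"
  by (metis mult.commute mult_left_mono \<phi>_le h_nonneg)

lemma conv_integrable: "integrable lborel (\<lambda>y. h y * \<phi> (s - y))"
proof (rule Bochner_Integration.integrable_bound[where f = "\<lambda>y. K * h y"])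
  show "integrable lborel (\<lambda>y. K * h y)" using h_integrable by simp
  show "AE y in lborel. norm (h y * \<phi> (s - y)) \<le> norm (K * h y)"
    using h_nonneg \<phi>_nonneg h_mult_\<phi>_le K by (intro AE_I2) (simp add: abs_mult)
qed simp

lemma \<psi>_eq: "\<psi> s = (\<integral>y. h y * \<phi> (s - \<kappa> - y) \<partial>lborel)"
  by (simp add: \<psi>_def conv_def)

lemma \<psi>_nonneg: "\<psi> s \<ge> 0" unfolding \<psi>_eq
  by (intro integral_nonneg_AE AE_I2) (simp add: h_nonneg \<phi>_nonneg)

lemma \<psi>_le: "\<psi> s \<le> K"
proof -
  have "\<psi> s \<le> (\<integral>y. K * h y \<partial>lborel)" unfolding \<psi>_eq
    using h_integrable h_mult_\<phi>_le by (intro integral_mono conv_integrable) auto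
  also have "\<dots> = K" using h_integral by simp
  finally show ?thesis .
qed

definition "\<psi>_trunc R s = (\<integral>y. indicator {-R..R} y * h y * \<phi> (s - \<kappa> - y) \<partial>lborel)"
definition "h_mass R = (\<integral>y. indicator {-R..R} y * h y \<partial>lborel)"

lemma \<psi>_trunc_integrable: "integrable lborel (\<lambda>y. indicator {-R..R} y * h y * \<phi> (s - y))"
proof (rule Bochner_Integration.integrable_bound[where f = "\<lambda>y. K * h y"])
  show "integrable lborel (\<lambda>y. K * h y)" using h_integrable by simp
  have "indicator {-R..R} y * h y * \<phi> (s - y) \<le> K * h y" for y
    using h_mult_\<phi>_le[of y] h_nonneg[of y] K by (simp add: indicator_def)
  then show "AE y in lborel. norm (indicator {-R..R} y * h y * \<phi> (s - y)) \<le> norm (K * h y)"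
    using h_nonneg \<phi>_nonneg K by (intro AE_I2) (simp add: abs_mult)
qed simp

lemma h_mass_integrable: "integrable lborel (\<lambda>y. indicator {-R..R} y * h y)"
  by (rule Bochner_Integration.integrable_bound[where f = h])
    (use h_integrable h_nonneg in \<open>auto simp: indicator_def\<close>)

lemma \<psi>_trunc_nonneg: "\<psi>_trunc R s \<ge> 0" unfolding \<psi>_trunc_def
  by (intro integral_nonneg_AE AE_I2) (simp add: h_nonneg \<phi>_nonneg)

lemma h_mass_nonneg: "h_mass R \<ge> 0" unfolding h_mass_def
  by (intro integral_nonneg_AE AE_I2) (simp add: h_nonneg)

lemma h_mass_le_1: "h_mass R \<le> 1"
proof -
  have "h_mass R \<le> (\<integral>y. h y \<partial>lborel)" unfolding h_mass_def
    by (intro integral_mono h_mass_integrable h_integrable) (simp add: indicator_def h_nonneg)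
  then show ?thesis using h_integral by simp
qed

lemma \<psi>_trunc_le_\<psi>: "\<psi>_trunc R s \<le> \<psi> s"
  unfolding \<psi>_trunc_def \<psi>_eq
  by (intro integral_mono \<psi>_trunc_integrable conv_integrable) (simp add: indicator_def h_nonneg \<phi>_nonneg)

lemma \<psi>_trunc_le_if_small:
  assumes e: "e \<ge> 0" and small: "\<And>z. z \<in> {s - \<kappa> - R..s - \<kappa> + R} \<Longrightarrow> \<phi> z \<le> e"
  shows "\<psi>_trunc R s \<le> e"
proof -
  have "\<psi>_trunc R s \<le> (\<integral>y. e * h y \<partial>lborel)" unfolding \<psi>_trunc_def
  proof (intro integral_mono \<psi>_trunc_integrable)
    show "integrable lborel (\<lambda>y. e * h y)" using h_integrable by simp
    fix y
    show "indicator {-R..R} y * h y * \<phi> (s - \<kappa> - y) \<le> e * h y"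
    proof (cases "y \<in> {-R..R}")
      case True
      then have "h y * \<phi> (s - \<kappa> - y) \<le> h y * e" using small by (intro mult_left_mono h_nonneg) auto
      then show ?thesis using True by (simp add: mult.commute)
    qed (simp add: e h_nonneg)
  qed
  also have "\<dots> = e" using h_integral by simp
  finally show ?thesis .
qed

lemma h_mass_tendsto_1: "(\<lambda>n. h_mass (real n)) \<longlonglongrightarrow> 1"
proof -
  have "(\<lambda>n. \<integral>y. indicator {-real n..real n} y * h y \<partial>lborel) \<longlonglongrightarrow> (\<integral>y. h y \<partial>lborel)"
  proof (rule integral_dominated_convergence[where w = h])
    show "AE y in lborel. (\<lambda>n. indicator {-real n..real n} y * h y) \<longlonglongrightarrow> h y"
    proof (intro AE_I2)
      fix y :: real
      obtain N :: nat where "\<bar>y\<bar> \<le> real N" using real_arch_simple by blast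
      then have "\<forall>n\<ge>N. indicator {-real n..real n} y * h y = h y"
        by (auto simp: indicator_def)
      then show "(\<lambda>n. indicator {-real n..real n} y * h y) \<longlonglongrightarrow> h y"
        by (intro tendsto_eventually) (auto simp: eventually_sequentially)
    qed
    show "\<And>n. AE y in lborel. norm (indicator {-real n..real n} y * h y) \<le> h y"
      using h_nonneg by (intro AE_I2) (simp add: indicator_def)
  qed (use h_integrable in auto)
  then show ?thesis using h_integral by (simp add: h_mass_def)
qed

lemma \<phi>_lipschitz: obtains \<Lambda> where "\<Lambda> > 0" "\<And>x y. \<bar>\<phi> x - \<phi> y\<bar> \<le> \<Lambda> * \<bar>x - y\<bar>"
proof -
  obtain B where B: "B \<ge> 0" "\<And>u v. u \<in> {0..K} \<Longrightarrow> v \<in> {0..K} \<Longrightarrow> \<bar>f u v\<bar> \<le> B"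
    using f_bounded by blast
  define \<Lambda> where "\<Lambda> = (2 * d * K + B) / c + 1"
  have \<Lambda>: "\<Lambda> > 0" using d K c B by (simp add: \<Lambda>_def add_pos_nonneg)
  have "\<bar>deriv \<phi> x\<bar> \<le> \<Lambda>" for x
  proof -
    have "c * \<bar>deriv \<phi> x\<bar> = \<bar>d * discr_lap \<phi> x + f (\<phi> x) (\<psi> x)\<bar>"
    proof -
      have "c * deriv \<phi> x = d * discr_lap \<phi> x + f (\<phi> x) (\<psi> x)"
        using wave_eq[of x] by (simp add: \<psi>_def \<kappa>_def)
      then show ?thesis using c by (metis abs_mult abs_of_pos)
    qed
    also have "\<dots> \<le> d * \<bar>discr_lap \<phi> x\<bar> + \<bar>f (\<phi> x) (\<psi> x)\<bar>"
      using d abs_triangle_ineq[of "d * discr_lap \<phi> x"] by (simp add: abs_mult)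
    also have "\<dots> \<le> d * (2 * K) + B"
      using \<phi>_range[of "x + 1"] \<phi>_range[of x] \<phi>_range[of "x - 1"] B(2) \<phi>_range[of x] \<psi>_nonneg \<psi>_le d
      by (intro add_mono mult_left_mono) (auto simp: discr_lap_def abs_le_iff)
    finally have "c * \<bar>deriv \<phi> x\<bar> \<le> 2 * d * K + B" by simp
    then show ?thesis using c by (simp add: \<Lambda>_def field_simps)
  qed
  then have "\<bar>\<phi> x - \<phi> y\<bar> \<le> \<Lambda> * \<bar>x - y\<bar>" for x y
    using field_differentiable_bound[of UNIV \<phi> "deriv \<phi>" \<Lambda> x y] \<phi>_deriv by auto
  with \<Lambda> that show ?thesis by blast
qed

lemma \<psi>_trunc_lipschitz:
  assumes L: "\<And>x y. \<bar>\<phi> x - \<phi> y\<bar> \<le> \<Lambda> * \<bar>x - y\<bar>" and Lp: "\<Lambda> \<ge> 0"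
  shows "\<bar>\<psi>_trunc R s - \<psi>_trunc R s'\<bar> \<le> \<Lambda> * \<bar>s - s'\<bar>"
proof -
  let ?g = "\<lambda>s y. indicator {-R..R} y * h y * \<phi> (s - \<kappa> - y)"
  have "\<psi>_trunc R s - \<psi>_trunc R s' = (\<integral>y. ?g s y - ?g s' y \<partial>lborel)"
    unfolding \<psi>_trunc_def
    by (rule Bochner_Integration.integral_diff[symmetric]) (use \<psi>_trunc_integrable in simp_all)
  then have "\<bar>\<psi>_trunc R s - \<psi>_trunc R s'\<bar> \<le> (\<integral>y. norm (?g s y - ?g s' y) \<partial>lborel)"
    using integral_norm_bound[of lborel "\<lambda>y. ?g s y - ?g s' y"] by simp
  also have "\<dots> \<le> (\<integral>y. (\<Lambda> * \<bar>s - s'\<bar>) * h y \<partial>lborel)"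
  proof (intro integral_mono)
    show "integrable lborel (\<lambda>y. norm (?g s y - ?g s' y))"
      by (intro integrable_norm Bochner_Integration.integrable_diff \<psi>_trunc_integrable)
    show "integrable lborel (\<lambda>y. (\<Lambda> * \<bar>s - s'\<bar>) * h y)" using h_integrable by simp
    fix y
    have "\<bar>\<phi> (s - \<kappa> - y) - \<phi> (s' - \<kappa> - y)\<bar> \<le> \<Lambda> * \<bar>s - s'\<bar>"
      using L[of "s - \<kappa> - y" "s' - \<kappa> - y"] by simp
    then have "h y * \<bar>\<phi> (s - \<kappa> - y) - \<phi> (s' - \<kappa> - y)\<bar> \<le> h y * (\<Lambda> * \<bar>s - s'\<bar>)"
      by (intro mult_left_mono h_nonneg)
    then show "norm (?g s y - ?g s' y) \<le> (\<Lambda> * \<bar>s - s'\<bar>) * h y"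
    proof (cases "y \<in> {-R..R}")
      case True
      have "?g s y - ?g s' y = h y * (\<phi> (s - \<kappa> - y) - \<phi> (s' - \<kappa> - y))"
        using True by (simp add: algebra_simps)
      then have "norm (?g s y - ?g s' y) = h y * \<bar>\<phi> (s - \<kappa> - y) - \<phi> (s' - \<kappa> - y)\<bar>"
        using h_nonneg[of y] by (simp add: abs_mult)
      then show ?thesis using \<open>h y * _ \<le> _\<close> by (simp add: mult.commute)
    qed (use h_nonneg Lp in simp)
  qed
  also have "\<dots> = \<Lambda> * \<bar>s - s'\<bar>" using h_integral by simp
  finally show ?thesis .
qed

lemma \<psi>_trunc_continuous: "continuous_on A (\<psi>_trunc R)"
proof -
  obtain \<Lambda> where "\<Lambda> > 0" "\<And>x y. \<bar>\<phi> x - \<phi> y\<bar> \<le> \<Lambda> * \<bar>x - y\<bar>" using \<phi>_lipschitz by blast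
  then have "\<Lambda>-lipschitz_on A (\<psi>_trunc R)"
    unfolding lipschitz_on_def dist_real_def using \<psi>_trunc_lipschitz by auto
  then show ?thesis by (rule lipschitz_on_continuous_on)
qed

definition "G = (SOME G. \<forall>x. (G has_real_derivative \<phi> x) (at x))"

lemma G_deriv: "(G has_real_derivative \<phi> x) (at x)"
proof -
  have "\<exists>G. \<forall>x. (G has_real_derivative \<phi> x) (at x)"
    using continuous_has_antiderivative[OF \<phi>_isCont] by metis
  then show ?thesis unfolding G_def by (rule someI_ex[THEN spec])
qed

lemma G_has_integral: "u \<le> v \<Longrightarrow> (\<phi> has_integral (G v - G u)) {u..v}"
  using G_deriv by (intro fundamental_theorem_of_calculus)
    (auto intro: has_vector_derivative_at_within simp: has_real_derivative_iff_has_vector_derivative)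

lemma G_increment_bounds:
  assumes "u \<le> v" shows "0 \<le> G v - G u" "G v - G u \<le> K * (v - u)"
proof -
  have "0 \<le> integral {u..v} \<phi>" by (rule integral_nonneg) (use G_has_integral[OF assms] \<phi>_nonneg in auto)
  moreover have "integral {u..v} \<phi> \<le> integral {u..v} (\<lambda>_. K)"
    by (rule integral_le) (use G_has_integral[OF assms] \<phi>_le in auto)
  ultimately show "0 \<le> G v - G u" "G v - G u \<le> K * (v - u)"
    using G_has_integral[OF assms] assms by (auto simp: integral_unique mult.commute)
qed

lemma G_mono: "u \<le> v \<Longrightarrow> G u \<le> G v" using G_increment_bounds by fastforce

lemma G_lipschitz: "\<bar>G u - G v\<bar> \<le> K * \<bar>u - v\<bar>"
  using G_increment_bounds[of u v] G_increment_bounds[of v u] by (cases "u \<le> v") (auto simp: algebra_simps)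

lemma G_increment_le_shifted_nn_integral:
  assumes y: "y \<in> {-R..R}"
  shows "ennreal (max 0 (G (t - \<kappa> - R) - G (x - \<kappa> + R)))
    \<le> (\<integral>\<^sup>+s. ennreal (\<phi> (s - \<kappa> - y)) * indicator {x..t} s \<partial>lborel)"
proof (cases "x - \<kappa> + R \<le> t - \<kappa> - R")
  case False
  then show ?thesis using G_mono[of "t - \<kappa> - R" "x - \<kappa> + R"] by simp
next
  case True
  have "ennreal (max 0 (G (t - \<kappa> - R) - G (x - \<kappa> + R))) =
      (\<integral>\<^sup>+u. ennreal (\<phi> u) * indicator {x - \<kappa> + R..t - \<kappa> - R} u \<partial>lborel)"
    using G_mono[OF True] nn_integral_has_integral_lebesgue'[OF \<phi>_nonneg G_has_integral[OF True]] by simp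
  also have "\<dots> \<le> (\<integral>\<^sup>+u. ennreal (\<phi> u) * indicator {x - \<kappa> - y..t - \<kappa> - y} u \<partial>lborel)"
    using y by (intro nn_integral_mono) (auto simp: indicator_def)
  also have "\<dots> = (\<integral>\<^sup>+s. ennreal (\<phi> (- (\<kappa> + y) + 1 * s))
      * indicator {x - \<kappa> - y..t - \<kappa> - y} (- (\<kappa> + y) + 1 * s) \<partial>lborel)"
    using nn_integral_real_affine[where c = 1 and t = "- (\<kappa> + y)"
        and f = "\<lambda>u. ennreal (\<phi> u) * indicator {x - \<kappa> - y..t - \<kappa> - y} u"] by simp
  also have "\<dots> = (\<integral>\<^sup>+s. ennreal (\<phi> (s - \<kappa> - y)) * indicator {x..t} s \<partial>lborel)"
    by (intro nn_integral_cong) (auto simp: indicator_def algebra_simps)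
  finally show ?thesis .
qed

lemma \<psi>_trunc_nn_integral:
  "ennreal (\<psi>_trunc R s) = (\<integral>\<^sup>+y. ennreal (indicator {-R..R} y * h y * \<phi> (s - \<kappa> - y)) \<partial>lborel)"
  unfolding \<psi>_trunc_def
  by (rule nn_integral_eq_integral[symmetric])
    (auto intro!: \<psi>_trunc_integrable[of R "s - \<kappa>", simplified] AE_I2 simp: h_nonneg \<phi>_nonneg)

text \<open>Fubini: integrating \<open>\<psi>_trunc\<close> over \<open>{x..t}\<close> averages, with weight \<open>h\<close> on \<open>{-R..R}\<close>,
  integrals of \<open>\<phi>\<close> over windows that all contain \<open>{x - \<kappa> + R..t - \<kappa> - R}\<close>.\<close>

lemma \<psi>_trunc_integral_lower:
  assumes xt: "x \<le> t"
  shows "h_mass R * max 0 (G (t - \<kappa> - R) - G (x - \<kappa> + R)) \<le> integral {x..t} (\<psi>_trunc R)"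
proof -
  define J where "J = integral {x..t} (\<psi>_trunc R)"
  define m where "m = max 0 (G (t - \<kappa> - R) - G (x - \<kappa> + R))"
  let ?g = "\<lambda>s y. indicator {-R..R} y * h y * \<phi> (s - \<kappa> - y)"
  have J: "(\<psi>_trunc R has_integral J) {x..t}"
    unfolding J_def by (intro integrable_integral integrable_continuous_interval \<psi>_trunc_continuous)
  have J_nonneg: "J \<ge> 0"
    using J \<psi>_trunc_nonneg by (auto intro: has_integral_nonneg)
  have "ennreal J = (\<integral>\<^sup>+s. ennreal (\<psi>_trunc R s) * indicator {x..t} s \<partial>lborel)"
    by (rule nn_integral_has_integral_lebesgue'[OF \<psi>_trunc_nonneg J, symmetric])
  also have "\<dots> = (\<integral>\<^sup>+s. (\<integral>\<^sup>+y. ennreal (?g s y) * indicator {x..t} s \<partial>lborel) \<partial>lborel)"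
    unfolding \<psi>_trunc_nn_integral by (intro nn_integral_cong nn_integral_multc[symmetric]) measurable
  also have "\<dots> = (\<integral>\<^sup>+y. (\<integral>\<^sup>+s. ennreal (?g s y) * indicator {x..t} s \<partial>lborel) \<partial>lborel)"
    by (rule lborel_pair.Fubini'[symmetric]) measurable
  also have "\<dots> \<ge> (\<integral>\<^sup>+y. ennreal (indicator {-R..R} y * h y) * ennreal m \<partial>lborel)"
  proof (intro nn_integral_mono)
    fix y
    show "ennreal (indicator {-R..R} y * h y) * ennreal m
      \<le> (\<integral>\<^sup>+s. ennreal (?g s y) * indicator {x..t} s \<partial>lborel)"
    proof (cases "y \<in> {-R..R}")
      case True
      have "(\<integral>\<^sup>+s. ennreal (?g s y) * indicator {x..t} s \<partial>lborel) =
          ennreal (h y) * (\<integral>\<^sup>+s. ennreal (\<phi> (s - \<kappa> - y)) * indicator {x..t} s \<partial>lborel)"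
        using True
        by (subst nn_integral_cmult[symmetric])
          (auto intro!: nn_integral_cong simp: ennreal_mult h_nonneg \<phi>_nonneg mult.assoc)
      then show ?thesis
        using True G_increment_le_shifted_nn_integral[OF True, of t x] by (simp add: m_def mult_left_mono)
    qed simp
  qed
  also have "(\<integral>\<^sup>+y. ennreal (indicator {-R..R} y * h y) * ennreal m \<partial>lborel) = ennreal (h_mass R * m)"
    unfolding h_mass_def
    by (subst nn_integral_multc, measurable, subst nn_integral_eq_integral)
      (auto intro!: h_mass_integrable AE_I2 simp: h_nonneg ennreal_mult' m_def)
  finally show ?thesis using J_nonneg unfolding J_def m_def by (simp add: ennreal_le_iff)
qed

lemma truncated_rate_choice:
  obtains R \<delta> where "R \<ge> 0" "\<delta> > 0" "b = 0 \<or> \<delta> \<le> b" "a - \<delta> + max 0 (b - \<delta>) * h_mass R > 0"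
proof (cases "b > 0")
  case True
  define p where "p = (a + b) / 2"
  have p: "p > 0" using a_plus_b_pos by (simp add: p_def)
  have "\<forall>\<^sub>F n in sequentially. dist (h_mass (real n)) 1 < p / b"
    using h_mass_tendsto_1 p True by (intro tendstoD) auto
  then obtain n where "dist (h_mass (real n)) 1 < p / b" by (meson eventually_sequentially order_refl)
  then have n: "b * (1 - h_mass n) < p" using True h_mass_le_1[of n] by (simp add: dist_real_def field_simps)
  define \<delta> where "\<delta> = min (b / 2) (p / 4)"
  have \<delta>: "\<delta> > 0" "\<delta> \<le> b" using True p by (auto simp: \<delta>_def)
  have "\<delta> * (1 + h_mass n) \<le> (p / 4) * 2"
    using h_mass_le_1[of n] h_mass_nonneg[of n] \<delta> by (intro mult_mono) (auto simp: \<delta>_def)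
  moreover have "a - \<delta> + (b - \<delta>) * h_mass n = (a + b) - b * (1 - h_mass n) - \<delta> * (1 + h_mass n)"
    by (simp add: algebra_simps)
  ultimately have "a - \<delta> + max 0 (b - \<delta>) * h_mass n > 0" using n p \<delta> by (simp add: p_def)
  then show ?thesis using that[of "real n" \<delta>] \<delta> by auto
next
  case False
  then have "b = 0" using b_nonneg by simp
  then show ?thesis using that[of 0 "a / 2"] a_plus_b_pos by auto
qed

lemma f_ge_linear_near_0:
  assumes \<delta>: "\<delta> > 0" and u: "u \<in> {0..K}" and v: "0 \<le> v" "v \<le> w" "w \<le> K"
    and small: "u + v \<le> (\<delta> / M) powr (1 / \<sigma>)"
  shows "(a - \<delta>) * u + (b - \<delta>) * v \<le> f u w"
proof -
  have "M * (u + v) powr (1 + \<sigma>) \<le> \<delta> * (u + v)"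
    using powr_le_linear_near_0[OF M \<sigma>(1) \<delta> _ small] u v by auto
  moreover have "a * u + b * v - M * (u + v) powr (1 + \<sigma>) \<le> f u v"
    using f_ge_linear_minus_powr[OF u] v by auto
  moreover have "f u v \<le> f u w" using f_mono_right[OF u v] .
  ultimately show ?thesis by (simp add: algebra_simps)
qed

lemma f_lower_bound_at_bot:
  obtains \<alpha> \<beta> R \<xi>0 where "\<beta> \<ge> 0" "R \<ge> 0" "\<alpha> + \<beta> * h_mass R > 0"
    "\<And>s. s \<le> \<xi>0 \<Longrightarrow> \<alpha> * \<phi> s + \<beta> * \<psi>_trunc R s \<le> f (\<phi> s) (\<psi> s)"
proof -
  obtain R \<delta> where R: "R \<ge> 0" and \<delta>: "\<delta> > 0" "b = 0 \<or> \<delta> \<le> b"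
    and rate: "a - \<delta> + max 0 (b - \<delta>) * h_mass R > 0"
    using truncated_rate_choice by blast
  define \<epsilon> where "\<epsilon> = min K ((\<delta> / M) powr (1 / \<sigma>) / 2)"
  have "\<epsilon> > 0" using K \<delta> M by (simp add: \<epsilon>_def)
  then obtain X where X: "\<And>s. s \<le> X \<Longrightarrow> \<phi> s < \<epsilon>"
    using order_tendstoD(2)[OF \<phi>_at_bot] by (auto simp: eventually_at_bot_linorder)
  have "(a - \<delta>) * \<phi> s + max 0 (b - \<delta>) * \<psi>_trunc R s \<le> f (\<phi> s) (\<psi> s)" if s: "s \<le> X - R" for s
  proof -
    define v where "v = (if b = 0 then 0 else \<psi>_trunc R s)"
    have "\<psi>_trunc R s \<le> \<epsilon>"
      using X s \<kappa>_nonneg \<open>\<epsilon> > 0\<close> by (intro \<psi>_trunc_le_if_small) (auto intro: less_imp_le)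
    then have "v \<le> \<epsilon>" "\<phi> s \<le> \<epsilon>" using X[of s] s R \<open>\<epsilon> > 0\<close> by (auto simp: v_def)
    then have "(a - \<delta>) * \<phi> s + (b - \<delta>) * v \<le> f (\<phi> s) (\<psi> s)"
      using \<psi>_trunc_nonneg \<psi>_trunc_le_\<psi> \<psi>_nonneg \<psi>_le \<phi>_range
      by (intro f_ge_linear_near_0 \<delta>(1)) (auto simp: v_def \<epsilon>_def)
    moreover have "(b - \<delta>) * v = max 0 (b - \<delta>) * \<psi>_trunc R s" using \<delta> by (auto simp: v_def)
    ultimately show ?thesis by simp
  qed
  then show ?thesis
    using that[of "max 0 (b - \<delta>)" R "a - \<delta>" "X - R"] R rate by auto
qed

definition "V s = c * \<phi> s - d * (G (s + 1) - 2 * G s + G (s - 1))"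

lemma V_deriv: "(V has_real_derivative f (\<phi> s) (\<psi> s)) (at s)"
proof -
  have g1: "((\<lambda>s. G (s + 1)) has_real_derivative \<phi> (s + 1)) (at s)"
    using G_deriv[of "s + 1"] by (simp add: DERIV_shift)
  have g2: "((\<lambda>s. G (s - 1)) has_real_derivative \<phi> (s - 1)) (at s)"
    using G_deriv[of "s + -1"] DERIV_shift[of G "\<phi> (s + -1)" s "-1"] by simp
  have "(V has_real_derivative c * deriv \<phi> s - d * (\<phi> (s + 1) - 2 * \<phi> s + \<phi> (s - 1))) (at s)"
    unfolding V_def[abs_def]
    by (intro DERIV_diff DERIV_cmult DERIV_add \<phi>_deriv g1 g2 G_deriv)
  moreover have "c * deriv \<phi> s - d * (\<phi> (s + 1) - 2 * \<phi> s + \<phi> (s - 1)) = f (\<phi> s) (\<psi> s)"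
    using wave_eq[of s] by (simp add: \<psi>_def \<kappa>_def discr_lap_def)
  ultimately show ?thesis by simp
qed

lemma V_increment_lower:
  assumes \<beta>: "\<beta> \<ge> 0"
    and lower: "\<And>s. s \<le> \<xi>0 \<Longrightarrow> \<alpha> * \<phi> s + \<beta> * \<psi>_trunc R s \<le> f (\<phi> s) (\<psi> s)"
    and xt: "x \<le> t" "t \<le> \<xi>0"
  shows "\<alpha> * (G t - G x) + \<beta> * h_mass R * max 0 (G (t - \<kappa> - R) - G (x - \<kappa> + R)) \<le> V t - V x"
proof -
  have "(V has_vector_derivative f (\<phi> s) (\<psi> s)) (at s within {x..t})" for s
    using V_deriv[of s] unfolding has_real_derivative_iff_has_vector_derivative
    by (rule has_vector_derivative_at_within)
  then have V: "((\<lambda>s. f (\<phi> s) (\<psi> s)) has_integral (V t - V x)) {x..t}"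
    by (rule fundamental_theorem_of_calculus[OF xt(1)])
  define J where "J = integral {x..t} (\<psi>_trunc R)"
  have "(\<psi>_trunc R has_integral J) {x..t}"
    unfolding J_def by (intro integrable_integral integrable_continuous_interval \<psi>_trunc_continuous)
  then have "((\<lambda>s. \<alpha> * \<phi> s + \<beta> * \<psi>_trunc R s) has_integral (\<alpha> * (G t - G x) + \<beta> * J)) {x..t}"
    by (intro has_integral_add has_integral_mult_right G_has_integral xt)
  then have "\<alpha> * (G t - G x) + \<beta> * J \<le> V t - V x"
    by (rule has_integral_le[OF _ V]) (use lower xt in auto)
  moreover have "\<beta> * (h_mass R * max 0 (G (t - \<kappa> - R) - G (x - \<kappa> + R))) \<le> \<beta> * J"
    unfolding J_def using \<beta> by (intro mult_left_mono \<psi>_trunc_integral_lower xt)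
  ultimately show ?thesis by (simp add: mult.assoc)
qed

lemma V_bounded: "\<bar>V s\<bar> \<le> (c + d) * K"
proof -
  have "\<bar>G (s + 1) - 2 * G s + G (s - 1)\<bar> \<le> K"
    using G_increment_bounds[of s "s + 1"] G_increment_bounds[of "s - 1" s] by (simp add: abs_le_iff)
  then have "\<bar>d * (G (s + 1) - 2 * G s + G (s - 1))\<bar> \<le> d * K"
    using d by (simp add: abs_mult mult_left_mono)
  moreover have "\<bar>c * \<phi> s\<bar> \<le> c * K" using c \<phi>_range[of s] by (simp add: abs_mult mult_left_mono)
  ultimately have "\<bar>c * \<phi> s\<bar> + \<bar>d * (G (s + 1) - 2 * G s + G (s - 1))\<bar> \<le> (c + d) * K"
    by (simp add: distrib_right)
  then show ?thesis unfolding V_def using abs_triangle_ineq4 order_trans by blast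
qed

lemma G_gap_bound:
  assumes \<beta>: "\<beta> \<ge> 0" and rate: "\<alpha> + \<beta> * h_mass R > 0" and R: "R \<ge> 0"
    and lower: "\<And>s. s \<le> \<xi>0 \<Longrightarrow> \<alpha> * \<phi> s + \<beta> * \<psi>_trunc R s \<le> f (\<phi> s) (\<psi> s)"
    and z: "z \<le> \<xi>0 - \<kappa> - R"
  shows "G (\<xi>0 - \<kappa> - R) - G z \<le> (2 * (c + d) * K + \<bar>\<alpha>\<bar> * (2 * K * (\<kappa> + R))) / (\<alpha> + \<beta> * h_mass R)"
proof -
  define x where "x = z - R + \<kappa>"
  define D where "D = G (\<xi>0 - \<kappa> - R) - G z"
  have D: "D \<ge> 0" using G_mono[OF z] by (simp add: D_def)
  have "x \<le> \<xi>0" using z R \<kappa>_nonneg by (simp add: x_def)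
  then have "\<alpha> * (G \<xi>0 - G x) + \<beta> * h_mass R * D \<le> V \<xi>0 - V x"
    using V_increment_lower[OF \<beta> lower, where x = x and t = \<xi>0] D by (simp add: x_def D_def)
  moreover have "\<alpha> * D - \<bar>\<alpha>\<bar> * (2 * K * (\<kappa> + R)) \<le> \<alpha> * (G \<xi>0 - G x)"
  proof -
    have "G \<xi>0 - G x - D = (G \<xi>0 - G (\<xi>0 - \<kappa> - R)) + (G z - G x)" by (simp add: D_def)
    then have "\<bar>G \<xi>0 - G x - D\<bar> \<le> \<bar>G \<xi>0 - G (\<xi>0 - \<kappa> - R)\<bar> + \<bar>G z - G x\<bar>"
      by (metis abs_triangle_ineq)
    also have "\<dots> \<le> K * \<bar>\<xi>0 - (\<xi>0 - \<kappa> - R)\<bar> + K * \<bar>z - x\<bar>" by (intro add_mono G_lipschitz)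
    also have "\<dots> \<le> K * (\<kappa> + R) + K * (\<kappa> + R)"
      using K R \<kappa>_nonneg by (intro add_mono mult_left_mono) (auto simp: x_def abs_le_iff)
    finally have "\<bar>\<alpha> * (G \<xi>0 - G x - D)\<bar> \<le> \<bar>\<alpha>\<bar> * (2 * K * (\<kappa> + R))"
      unfolding abs_mult by (intro mult_left_mono) auto
    then show ?thesis unfolding right_diff_distrib by linarith
  qed
  moreover have "V \<xi>0 - V x \<le> 2 * (c + d) * K" using V_bounded[of \<xi>0] V_bounded[of x] by linarith
  moreover have "(\<alpha> + \<beta> * h_mass R) * D = \<alpha> * D + \<beta> * h_mass R * D" by (rule distrib_right)
  ultimately have "(\<alpha> + \<beta> * h_mass R) * D \<le> 2 * (c + d) * K + \<bar>\<alpha>\<bar> * (2 * K * (\<kappa> + R))"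
    by linarith
  then show ?thesis using rate by (simp add: D_def pos_le_divide_eq mult.commute)
qed

lemma G_bdd_below: "bdd_below (range G)"
proof -
  obtain \<beta> R \<alpha> \<xi>0 where \<beta>: "\<beta> \<ge> 0" and R: "R \<ge> 0" and rate: "\<alpha> + \<beta> * h_mass R > 0"
    and lower: "\<And>s. s \<le> \<xi>0 \<Longrightarrow> \<alpha> * \<phi> s + \<beta> * \<psi>_trunc R s \<le> f (\<phi> s) (\<psi> s)"
    by (rule f_lower_bound_at_bot) blast
  define B where "B = (2 * (c + d) * K + \<bar>\<alpha>\<bar> * (2 * K * (\<kappa> + R))) / (\<alpha> + \<beta> * h_mass R)"
  have B: "B \<ge> 0"
    using rate c d K R \<kappa>_nonneg unfolding B_def by (simp add: zero_le_divide_iff)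
  have "G (\<xi>0 - \<kappa> - R) - B \<le> G z" for z
  proof (cases "z \<le> \<xi>0 - \<kappa> - R")
    case True
    then show ?thesis using G_gap_bound[OF \<beta> rate R lower True] unfolding B_def by linarith
  next
    case False
    then show ?thesis using G_mono[of "\<xi>0 - \<kappa> - R" z] B by linarith
  qed
  then show ?thesis by (rule bdd_belowI2)
qed

text \<open>This is the \<open>\<Phi>(\<xi>) = \<integral>\<^sub>-\<^sub>\<infinity>\<^sup>\<xi> \<phi>\<close> of the statement; it makes sense only because
  \<open>G\<close> is bounded below.\<close>

definition "\<Phi> s = G s - Inf (range G)"

lemma \<Phi>_nonneg: "\<Phi> s \<ge> 0"
  using cInf_lower[OF _ G_bdd_below, of "G s"] by (simp add: \<Phi>_def)

lemma \<Phi>_mono: "u \<le> v \<Longrightarrow> \<Phi> u \<le> \<Phi> v"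
  using G_mono by (simp add: \<Phi>_def)

lemma \<Phi>_deriv: "(\<Phi> has_real_derivative \<phi> x) (at x)"
  unfolding \<Phi>_def[abs_def] using G_deriv by (auto intro!: derivative_eq_intros)

lemma \<Phi>_tendsto_0: "(\<Phi> \<longlongrightarrow> 0) at_bot"
proof -
  have "(G \<longlongrightarrow> Inf (range G)) at_bot"
  proof (rule order_tendstoI)
    fix y assume "y < Inf (range G)"
    then show "eventually (\<lambda>x. y < G x) at_bot"
      using cInf_lower[OF _ G_bdd_below] by (intro always_eventually) (auto intro: less_le_trans)
  next
    fix y assume "Inf (range G) < y"
    then obtain z where "G z < y" using cInf_less_iff[OF _ G_bdd_below] by auto
    then show "eventually (\<lambda>x. G x < y) at_bot"
      unfolding eventually_at_bot_linorder by (auto intro: le_less_trans G_mono)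
  qed
  from tendsto_diff[OF this tendsto_const[of "Inf (range G)"]] show ?thesis
    by (simp add: \<Phi>_def[abs_def])
qed

lemma V_eq_\<Phi>: "V s = c * \<phi> s - d * (\<Phi> (s + 1) - 2 * \<Phi> s + \<Phi> (s - 1))"
  by (simp add: V_def \<Phi>_def algebra_simps)

lemma V_tendsto_0: "(V \<longlongrightarrow> 0) at_bot"
proof -
  have "((\<lambda>s. c * \<phi> s - d * (\<Phi> (s + 1) - 2 * \<Phi> s + \<Phi> (s + -1))) \<longlongrightarrow> c * 0 - d * (0 - 2 * 0 + 0)) at_bot"
    by (intro tendsto_intros \<phi>_at_bot \<Phi>_tendsto_0 filterlim_compose[OF \<Phi>_tendsto_0 filterlim_add_const_at_bot])
  then show ?thesis by (simp add: V_eq_\<Phi>[abs_def])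
qed

text \<open>Letting \<open>x \<rightarrow> -\<infinity>\<close> in \<open>V_increment_lower\<close> turns it into a delay inequality for \<open>\<Phi>\<close>.\<close>

lemma V_ge_\<Phi>:
  assumes \<beta>: "\<beta> \<ge> 0"
    and lower: "\<And>s. s \<le> \<xi>0 \<Longrightarrow> \<alpha> * \<phi> s + \<beta> * \<psi>_trunc R s \<le> f (\<phi> s) (\<psi> s)"
    and t: "t \<le> \<xi>0"
  shows "\<alpha> * \<Phi> t + \<beta> * h_mass R * \<Phi> (t - \<kappa> - R) \<le> V t"
proof -
  let ?lhs = "\<lambda>x. \<alpha> * (\<Phi> t - \<Phi> x) + \<beta> * h_mass R * max 0 (\<Phi> (t - \<kappa> - R) - \<Phi> (x + (R - \<kappa>)))"
  have "(?lhs \<longlongrightarrow> \<alpha> * (\<Phi> t - 0) + \<beta> * h_mass R * max 0 (\<Phi> (t - \<kappa> - R) - 0)) at_bot"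
    by (intro tendsto_intros \<Phi>_tendsto_0 filterlim_compose[OF \<Phi>_tendsto_0 filterlim_add_const_at_bot])
  moreover have "((\<lambda>x. V t - V x) \<longlongrightarrow> V t - 0) at_bot" by (intro tendsto_intros V_tendsto_0)
  moreover have "eventually (\<lambda>x. ?lhs x \<le> V t - V x) at_bot"
    unfolding eventually_at_bot_linorder
    using V_increment_lower[OF \<beta> lower _ t] by (intro exI[of _ t]) (simp add: \<Phi>_def algebra_simps)
  ultimately have "\<alpha> * \<Phi> t + \<beta> * h_mass R * max 0 (\<Phi> (t - \<kappa> - R)) \<le> V t"
    by (simp add: tendsto_le[OF trivial_limit_at_bot_linorder])
  then show ?thesis using \<Phi>_nonneg by simp
qed

lemma \<Phi>_exp_bound:
  obtains C \<gamma> \<xi>1 where "C \<ge> 0" "\<gamma> > 0" "\<And>t. t \<le> \<xi>1 \<Longrightarrow> \<Phi> t \<le> C * exp (\<gamma> * t)"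
proof -
  obtain \<beta> R \<alpha> \<xi>0 where \<beta>: "\<beta> \<ge> 0" and R: "R \<ge> 0" and rate: "\<alpha> + \<beta> * h_mass R > 0"
    and lower: "\<And>s. s \<le> \<xi>0 \<Longrightarrow> \<alpha> * \<phi> s + \<beta> * \<psi>_trunc R s \<le> f (\<phi> s) (\<psi> s)"
    by (rule f_lower_bound_at_bot) blast
  have "\<alpha> * \<Phi> t + \<beta> * h_mass R * \<Phi> (t - (\<kappa> + R))
      \<le> c * \<phi> t - d * (\<Phi> (t + 1) - 2 * \<Phi> t + \<Phi> (t - 1))" if "t \<le> \<xi>0" for t
    using V_ge_\<Phi>[OF \<beta> lower that] unfolding V_eq_\<Phi> diff_diff_eq .
  moreover have "c \<ge> 0" "\<kappa> + R \<ge> 0" using c R \<kappa>_nonneg by auto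
  ultimately obtain T where T: "T > 0" "\<And>\<xi>. \<xi> \<le> \<xi>0 \<Longrightarrow> \<Phi> (\<xi> - T) \<le> \<Phi> \<xi> / 2"
    using delay_supersolution_halves[OF _ d _ rate \<Phi>_nonneg \<Phi>_mono \<Phi>_deriv] by metis
  have "\<Phi> t \<le> 2 * \<Phi> \<xi>0 * exp (- (ln 2 / T) * \<xi>0) * exp (ln 2 / T * t)" if "t \<le> \<xi>0" for t
    using halving_imp_exp_bound[where \<Phi> = \<Phi>, OF \<Phi>_nonneg \<Phi>_mono T that]
    by (simp add: mult.assoc exp_add[symmetric] right_diff_distrib)
  moreover have "0 \<le> 2 * \<Phi> \<xi>0 * exp (- (ln 2 / T) * \<xi>0)" using \<Phi>_nonneg by simp
  moreover have "ln 2 / T > 0" using T by simp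
  ultimately show ?thesis using that by blast
qed

lemma \<phi>_exp_bound: obtains C \<gamma> where "C \<ge> 0" "\<gamma> > 0" "\<And>t. \<phi> t \<le> C * exp (\<gamma> * t)"
proof -
  obtain C \<gamma> \<xi>1 where C: "C \<ge> 0" and \<gamma>: "\<gamma> > 0" and \<Phi>: "\<And>t. t \<le> \<xi>1 \<Longrightarrow> \<Phi> t \<le> C * exp (\<gamma> * t)"
    by (rule \<Phi>_exp_bound) blast
  obtain \<Lambda> where \<Lambda>: "\<Lambda> > 0" "\<And>x y. \<bar>\<phi> x - \<phi> y\<bar> \<le> \<Lambda> * \<bar>x - y\<bar>" by (rule \<phi>_lipschitz) blast
  define \<Lambda>' where "\<Lambda>' = max \<Lambda> K"
  have \<Lambda>'_ge: "K \<le> \<Lambda>'" "\<Lambda> \<le> \<Lambda>'" by (simp_all add: \<Lambda>'_def)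
  have \<Lambda>'_pos: "\<Lambda>' > 0" using \<Lambda>'_ge K by simp
  have lip: "\<bar>\<phi> x - \<phi> y\<bar> \<le> \<Lambda>' * \<bar>x - y\<bar>" for x y
    using \<Lambda>(2)[of x y] mult_right_mono[OF \<Lambda>'_ge(2), of "\<bar>x - y\<bar>"] by simp
  have small: "\<phi> x \<le> 2 * \<Lambda>'" for x using \<phi>_le[of x] \<Lambda>'_ge K by simp
  define C' where "C' = sqrt (4 * \<Lambda>' * C * exp \<gamma>)"
  have "\<phi> t \<le> C' * exp (\<gamma> / 2 * t)" if "t \<le> \<xi>1 - 1" for t
    unfolding C'_def
    by (rule exp_bound_of_antiderivative_exp_bound[OF \<Phi>_deriv \<phi>_nonneg lip \<Lambda>'_pos small \<Phi>_nonneg \<Phi> that])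
  then have "\<phi> t \<le> max C' (K * exp (- (\<gamma> / 2) * (\<xi>1 - 1))) * exp (\<gamma> / 2 * t)" for t
    using \<phi>_le K \<gamma> by (intro exp_bound_extend_right) auto
  moreover have "C' \<ge> 0" using \<Lambda>'_pos C by (simp add: C'_def)
  ultimately show ?thesis using that[of _ "\<gamma> / 2"] \<gamma> by (meson half_gt_zero max.coboundedI1)
qed

end

lemma travelling_wave_if_assumptions:
  assumes "d > 0" and "\<tau> \<ge> 0" and "K > 0"
    and "partials_on_square K f f1 f2"
    and "cond_F1 K f f2" and "cond_F2 K f f1 f2"
    and "cond_H1 h" and "tw_solution d \<tau> K f h c \<phi>"
  shows "\<exists>M \<sigma>. travelling_wave d \<tau> K c f f1 f2 h \<phi> M \<sigma>"
proof -
  obtain M \<sigma> where "M > 0" "\<sigma> \<in> {0<..1}" "\<forall>u\<in>{0..K}. \<forall>v\<in>{0..K}.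
      0 \<le> f1 0 0 * u + f2 0 0 * v - f u v \<and> f1 0 0 * u + f2 0 0 * v - f u v \<le> M * (u + v) powr (1 + \<sigma>)"
    using assms(6) unfolding cond_F2_def by blast
  then have "travelling_wave d \<tau> K c f f1 f2 h \<phi> M \<sigma>"
    using assms by unfold_locales (auto simp: cond_F1_def cond_H1_def tw_solution_def)
  then show ?thesis by blast
qed

theorem lemma4p1:
  fixes d \<tau> K c :: real and f f1 f2 :: "real \<Rightarrow> real \<Rightarrow> real" and h \<phi> :: "real \<Rightarrow> real"
  assumes "d > 0" and "\<tau> \<ge> 0" and "K > 0"
    and "partials_on_square K f f1 f2"
    and "cond_F1 K f f2" and "cond_F2 K f f1 f2"
    and "cond_H1 h" and "cond_H2 h"
    and "tw_solution d \<tau> K f h c \<phi>"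
  shows "\<exists>\<gamma>>0. (\<forall>\<xi>. set_integrable lborel {..\<xi>} \<phi>) \<and>
           bdd_above (range (\<lambda>\<xi>. \<phi> \<xi> * exp (- \<gamma> * \<xi>))) \<and>
           bdd_above (range (\<lambda>\<xi>. (LINT s:{..\<xi>}|lborel. \<phi> s) * exp (- \<gamma> * \<xi>)))"
proof -
  obtain M \<sigma> where "travelling_wave d \<tau> K c f f1 f2 h \<phi> M \<sigma>"
    using travelling_wave_if_assumptions[OF assms(1-7,9)] by blast
  then interpret travelling_wave d \<tau> K c f f1 f2 h \<phi> M \<sigma> .
  obtain C \<gamma> where C: "C \<ge> 0" and \<gamma>: "\<gamma> > 0" and bound: "\<And>t. \<phi> t \<le> C * exp (\<gamma> * t)"
    by (rule \<phi>_exp_bound) blast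
  show ?thesis
    using exp_bound_imp_weighted_bounds[OF \<phi>_measurable \<phi>_nonneg bound \<gamma> C] \<gamma> by blast
qed

end
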